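(* Let $W$ be a $k[\overline{G}]$-module generated (as $k[\overline G]$-module) by $W^{\overline{N}'}$. Then the composite of the natural maps $W^{\overline N'}\hookrightarrow W\twoheadrightarrow W_{\overline N}$ is an isomorphism of $k$-vector spaces. Consequently, on the category of $k[\overline G]$-modules generated by their $\overline N'$-invariants, the functors $W\mapsto W^{\overline N'}$ and $W\mapsto W_{\overline N}$ are isomorphic and both exact.
   Context: $k$ is a field of characteristic $p$. $\overline G={\rm SL}_2({\mathbb F}_p)$, and $\overline N\neq\overline N'$ are the unipotent radicals of two distinct Borel subgroups of $\overline G$. $W^{\overline N'}$ denotes invariants and $W_{\overline N}=W/\langle \bar n w-w\rangle$ denotes coinvariants. *)

theory Defs
  imports Main "HOL.Vector_Spaces" "HOL-Computational_Algebra.Primes"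
begin

text \<open>2x2 matrices (a,b,c,d) = [[a,b],[c,d]] with integer entries; elements of
  SL2(F_p) are represented with entries in {0..<p}, arithmetic taken mod p.\<close>
type_synonym m2 = "int \<times> int \<times> int \<times> int"

definition SL2 :: "nat \<Rightarrow> m2 set" where
  "SL2 p = {(a,b,c,d). a \<in> {0..<int p} \<and> b \<in> {0..<int p} \<and> c \<in> {0..<int p}
                       \<and> d \<in> {0..<int p} \<and> (a*d - b*c) mod int p = 1}"

fun m2_mult :: "nat \<Rightarrow> m2 \<Rightarrow> m2 \<Rightarrow> m2" where
  "m2_mult p (a,b,c,d) (e,f,g,h) =
     ((a*e + b*g) mod int p, (a*f + b*h) mod int p,
      (c*e + d*g) mod int p, (c*f + d*h) mod int p)"

fun m2_inv :: "nat \<Rightarrow> m2 \<Rightarrow> m2" where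
  "m2_inv p (a,b,c,d) = (d mod int p, (- b) mod int p, (- c) mod int p, a mod int p)"

definition m2_one :: m2 where "m2_one = (1,0,0,1)"

definition U_std :: "nat \<Rightarrow> m2 set" where
  "U_std p = {(1,b,0,1) | b. b \<in> {0..<int p}}"

text \<open>The Borel subgroups of SL2(F_p) are the conjugates g B g^-1 of the upper
  triangular Borel B; the unipotent radical of g B g^-1 is g U g^-1.\<close>
definition unip_rad_borel :: "nat \<Rightarrow> m2 set \<Rightarrow> bool" where
  "unip_rad_borel p N \<longleftrightarrow>
     (\<exists>g\<in>SL2 p. N = (\<lambda>u. m2_mult p (m2_mult p g u) (m2_inv p g)) ` U_std p)"

text \<open>A k[SL2(F_p)]-module: a k-vector space (the whole type 'v, scalar
  multiplication scale) with a linear action rho of SL2(F_p).\<close>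
definition is_rep :: "nat \<Rightarrow> ('k::field \<Rightarrow> 'v::ab_group_add \<Rightarrow> 'v) \<Rightarrow> (m2 \<Rightarrow> 'v \<Rightarrow> 'v) \<Rightarrow> bool" where
  "is_rep p scale \<rho> \<longleftrightarrow> vector_space scale
     \<and> (\<forall>g\<in>SL2 p. Vector_Spaces.linear scale scale (\<rho> g))
     \<and> \<rho> m2_one = id
     \<and> (\<forall>g\<in>SL2 p. \<forall>h\<in>SL2 p. \<rho> (m2_mult p g h) = \<rho> g \<circ> \<rho> h)"

definition invariants :: "(m2 \<Rightarrow> 'v \<Rightarrow> 'v) \<Rightarrow> m2 set \<Rightarrow> 'v set" where
  "invariants \<rho> N = {w. \<forall>n\<in>N. \<rho> n w = w}"

definition coinv_rel :: "('k::field \<Rightarrow> 'v::ab_group_add \<Rightarrow> 'v) \<Rightarrow> (m2 \<Rightarrow> 'v \<Rightarrow> 'v) \<Rightarrow> m2 set \<Rightarrow> 'v set" where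
  "coinv_rel scale \<rho> N = module.span scale {\<rho> n w - w | n w. n \<in> N}"

text \<open>The quotient map W \<rightarrow> W_N, sending w to its coset; W_N is the set of cosets.\<close>
definition coinv_class :: "('k::field \<Rightarrow> 'v::ab_group_add \<Rightarrow> 'v) \<Rightarrow> (m2 \<Rightarrow> 'v \<Rightarrow> 'v) \<Rightarrow> m2 set \<Rightarrow> 'v \<Rightarrow> 'v set" where
  "coinv_class scale \<rho> N w = {w + s | s. s \<in> coinv_rel scale \<rho> N}"

definition coinvariants :: "('k::field \<Rightarrow> 'v::ab_group_add \<Rightarrow> 'v) \<Rightarrow> (m2 \<Rightarrow> 'v \<Rightarrow> 'v) \<Rightarrow> m2 set \<Rightarrow> 'v set set" where
  "coinvariants scale \<rho> N = range (coinv_class scale \<rho> N)"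

definition generated_by_inv :: "nat \<Rightarrow> ('k::field \<Rightarrow> 'v::ab_group_add \<Rightarrow> 'v) \<Rightarrow> (m2 \<Rightarrow> 'v \<Rightarrow> 'v) \<Rightarrow> m2 set \<Rightarrow> bool" where
  "generated_by_inv p scale \<rho> N' \<longleftrightarrow>
     module.span scale {\<rho> g w | g w. g \<in> SL2 p \<and> w \<in> invariants \<rho> N'} = UNIV"

definition G_map :: "nat \<Rightarrow> ('k::field \<Rightarrow> 'a::ab_group_add \<Rightarrow> 'a) \<Rightarrow> (m2 \<Rightarrow> 'a \<Rightarrow> 'a)
     \<Rightarrow> ('k \<Rightarrow> 'b::ab_group_add \<Rightarrow> 'b) \<Rightarrow> (m2 \<Rightarrow> 'b \<Rightarrow> 'b) \<Rightarrow> ('a \<Rightarrow> 'b) \<Rightarrow> bool" where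
  "G_map p s1 \<rho>1 s2 \<rho>2 f \<longleftrightarrow> Vector_Spaces.linear s1 s2 f \<and> (\<forall>g\<in>SL2 p. \<forall>w. f (\<rho>1 g w) = \<rho>2 g (f w))"

end

theory Submission
  imports Defs
begin

(* We realise G as the group Gk of determinant-one 2x2 matrices over the prime field F_p inside
   k, so that division is available, and twist the representation by g' so that N' becomes the
   upper unitriangular group U, generated by A = (1,1;0,1).  Then N = H U H^-1 with H = (a,b;c,d),
   c ~= 0 (c = 0 would force N = N').  N is cyclic, generated by B = H A H^-1, and the span of
   the (n w - w) is the image of B - 1.  The core theorem, for W generated by W^U, is
   W = W^U (+) (B - 1) W:
   (1) W = W^U + (B - 1) W: for f in W^U and X in G, if X is not in N.Borel, some element of N
       moves X into the Borel, which preserves W^U; otherwise all other points of the U-orbit of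
       X are of the first kind, and the orbit sum of X f is U-invariant.
   (2) W^U meets (B - 1) W trivially: H carries W^U into ker(B - 1); on the finitely spanned
       submodule generated by finitely many invariants, rank-nullity together with (1) forces
       the sum to be direct. *)

section \<open>2x2 matrices over a field\<close>

type_synonym 'k km = "'k \<times> 'k \<times> 'k \<times> 'k"

fun kmul :: "'k::field km \<Rightarrow> 'k km \<Rightarrow> 'k km" where
  "kmul (a,b,c,d) (e,f,g,h) = (a*e+b*g, a*f+b*h, c*e+d*g, c*f+d*h)"

text \<open>The adjugate, which is the inverse for matrices of determinant one.\<close>
fun kinv :: "'k::field km \<Rightarrow> 'k km" where
  "kinv (a,b,c,d) = (d, -b, -c, a)"

fun kdet :: "'k::field km \<Rightarrow> 'k" where
  "kdet (a,b,c,d) = a*d - b*c"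

definition kone :: "'k::field km" where "kone = (1,0,0,1)"

fun emb :: "m2 \<Rightarrow> 'k::field km" where
  "emb (a,b,c,d) = (of_int a, of_int b, of_int c, of_int d)"

lemma kmul_assoc: "kmul (kmul X Y) Z = kmul X (kmul Y Z)"
  by (cases X; cases Y; cases Z) (simp add: algebra_simps)
lemma kdet_mul: "kdet (kmul X Y) = kdet X * kdet Y"
  by (cases X; cases Y) (simp add: algebra_simps)
lemma kinv_mul: "kinv (kmul X Y) = kmul (kinv Y) (kinv X)"
  by (cases X; cases Y) (simp add: algebra_simps)
lemma kmul_inv_r: "kdet X = 1 \<Longrightarrow> kmul X (kinv X) = kone"
  by (cases X) (simp add: kone_def algebra_simps)
lemma kmul_inv_l: "kdet X = 1 \<Longrightarrow> kmul (kinv X) X = kone"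
  by (cases X) (simp add: kone_def algebra_simps)
lemma kmul_one_l[simp]: "kmul kone X = X" by (cases X) (simp add: kone_def)
lemma kmul_one_r[simp]: "kmul X kone = X" by (cases X) (simp add: kone_def)
lemma kdet_inv: "kdet (kinv X) = kdet X" by (cases X) (simp add: algebra_simps)
lemma kinv_one[simp]: "kinv kone = kone" by (simp add: kone_def)
lemma kinv_kinv[simp]: "kinv (kinv X) = X" by (cases X) simp

definition Uk :: "'k::field \<Rightarrow> 'k km" where "Uk t = (1, t, 0, 1)"
definition conjk :: "'k::field km \<Rightarrow> 'k km \<Rightarrow> 'k km" where "conjk H X = kmul (kmul H X) (kinv H)"

lemma Uk_add: "kmul (Uk s) (Uk t) = Uk (s + t)" by (simp add: Uk_def)
lemma Uk_0: "Uk 0 = kone" by (simp add: Uk_def kone_def)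
lemma kinv_Uk: "kinv (Uk t) = Uk (- t)" by (simp add: Uk_def)

lemma conjk_one_left[simp]: "conjk kone X = X" by (simp add: conjk_def)
lemma conjk_kone: "kdet H = 1 \<Longrightarrow> conjk H kone = kone" by (simp add: conjk_def kmul_inv_r)
lemma conjk_mul: "kdet H = 1 \<Longrightarrow> kmul (conjk H X) (conjk H Y) = conjk H (kmul X Y)"
  by (simp add: conjk_def kmul_assoc) (metis kmul_assoc kmul_inv_l kmul_one_l)
lemma kinv_conjk: "kinv (conjk H X) = conjk H (kinv X)"
  by (simp add: conjk_def kinv_mul kmul_assoc)
lemma conjk_conjk: "conjk (kmul G K) X = conjk G (conjk K X)"
  by (simp add: conjk_def kinv_mul kmul_assoc)

lemma conjk_upper:
  assumes "k1 * k4 = (1::'k::field)"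
  shows "conjk (k1, k2, 0, k4) (Uk s) = Uk (k1 * k1 * s)"
proof -
  have "k1 * k4 * k2 = k2" using assms by simp
  thus ?thesis using assms by (simp add: conjk_def Uk_def algebra_simps)
qed

definition Fp :: "'k::field set" where "Fp = range of_int"

fun inFp :: "'k::field km \<Rightarrow> bool" where
  "inFp (a,b,c,d) \<longleftrightarrow> a \<in> Fp \<and> b \<in> Fp \<and> c \<in> Fp \<and> d \<in> Fp"

definition Gk :: "'k::field km set" where "Gk = {X. inFp X \<and> kdet X = 1}"

lemma Fp_of_int[simp]: "of_int a \<in> Fp" by (simp add: Fp_def)
lemma Fp_of_nat[simp]: "of_nat n \<in> Fp" using Fp_of_int[of "int n"] by simp
lemma Fp_0[simp]: "0 \<in> Fp" and Fp_1[simp]: "1 \<in> Fp"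
  using Fp_of_int[of 0] Fp_of_int[of 1] by simp_all
lemma Fp_add[intro]: "x \<in> Fp \<Longrightarrow> y \<in> Fp \<Longrightarrow> x + y \<in> Fp"
  by (auto simp: Fp_def) (metis of_int_add rangeI)
lemma Fp_mult[intro]: "x \<in> Fp \<Longrightarrow> y \<in> Fp \<Longrightarrow> x * y \<in> Fp"
  by (auto simp: Fp_def) (metis of_int_mult rangeI)
lemma Fp_uminus[intro]: "x \<in> Fp \<Longrightarrow> - x \<in> Fp"
  by (auto simp: Fp_def) (metis of_int_minus rangeI)
lemma Fp_diff[intro]: "x \<in> Fp \<Longrightarrow> y \<in> Fp \<Longrightarrow> x - y \<in> Fp"
  using Fp_add Fp_uminus by (metis diff_conv_add_uminus)

lemma inFp_mul: "inFp X \<Longrightarrow> inFp Y \<Longrightarrow> inFp (kmul X Y)"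
  by (cases X; cases Y) auto
lemma inFp_inv: "inFp X \<Longrightarrow> inFp (kinv X)"
  by (cases X) auto

lemma Gk_mul: "X \<in> Gk \<Longrightarrow> Y \<in> Gk \<Longrightarrow> kmul X Y \<in> Gk"
  by (auto simp: Gk_def inFp_mul kdet_mul)
lemma Gk_inv: "X \<in> Gk \<Longrightarrow> kinv X \<in> Gk"
  by (auto simp: Gk_def inFp_inv kdet_inv)
lemma Gk_one: "kone \<in> Gk" by (simp add: Gk_def kone_def)
lemma Gk_det: "X \<in> Gk \<Longrightarrow> kdet X = 1" by (simp add: Gk_def)
lemma Uk_Gk: "t \<in> Fp \<Longrightarrow> Uk t \<in> Gk" by (simp add: Uk_def Gk_def)
lemma conjk_Gk: "H \<in> Gk \<Longrightarrow> X \<in> Gk \<Longrightarrow> conjk H X \<in> Gk" by (simp add: conjk_def Gk_mul Gk_inv)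

section \<open>Characteristic \<open>p\<close>: the prime field is \<open>\<int>/p\<close>\<close>

lemma of_int_mod_char:
  assumes "CHAR('k::field) = p"
  shows "(of_int (x mod int p) :: 'k) = of_int x"
proof -
  have "int p dvd (x mod int p - x)"
    by (simp add: mod_eq_dvd_iff_nat dvd_diff_commute mod_0_imp_dvd)
  hence "(of_int (x mod int p - x) :: 'k) = 0"
    using assms of_int_eq_0_iff_char_dvd[of "x mod int p - x", where 'a='k] by simp
  thus ?thesis by (metis eq_iff_diff_eq_0 of_int_diff)
qed

context
  fixes p :: nat
  assumes pr: "prime p" and ch: "CHAR('k::field) = p"
begin

lemma p_gt1: "p > 1" using pr prime_gt_1_nat by blast

lemma of_int_eq_iff_mod: "((of_int a :: 'k) = of_int b) \<longleftrightarrow> a mod int p = b mod int p"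
proof -
  have "((of_int a :: 'k) = of_int b) \<longleftrightarrow> (of_int (a - b) :: 'k) = 0" by simp
  also have "\<dots> \<longleftrightarrow> int p dvd (a - b)"
    using ch of_int_eq_0_iff_char_dvd[of "a - b", where 'a='k] by simp
  also have "\<dots> \<longleftrightarrow> a mod int p = b mod int p" by (simp add: mod_eq_dvd_iff)
  finally show ?thesis .
qed

lemma Fp_lift:
  assumes "(x::'k) \<in> Fp" obtains a where "a \<in> {0..<int p}" "of_int a = x"
proof -
  from assms obtain b where "x = of_int b" by (auto simp: Fp_def)
  moreover have "b mod int p \<in> {0..<int p}" using p_gt1 by auto
  moreover have "(of_int (b mod int p) :: 'k) = of_int b" using of_int_mod_char[OF ch] .
  ultimately show ?thesis using that by metis
qed

lemma Fp_nat:
  assumes "(t::'k) \<in> Fp" obtains n where "t = of_nat n"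
proof -
  obtain a where "a \<in> {0..<int p}" "of_int a = t" using Fp_lift[OF assms] by blast
  hence "t = of_nat (nat a)" by simp
  thus ?thesis using that by blast
qed

lemma Fp_finite: "finite (Fp :: 'k set)"
proof -
  have "(Fp :: 'k set) \<subseteq> of_int ` {0..<int p}" by (auto elim!: Fp_lift)
  thus ?thesis by (rule finite_subset) simp
qed

text \<open>\<open>Fp\<close> is a field: inverses come from B\'ezout's identity.\<close>
lemma Fp_inverse:
  assumes "(x::'k) \<in> Fp" shows "inverse x \<in> Fp"
proof (cases "x = 0")
  case True thus ?thesis by simp
next
  case False
  from assms obtain a where a: "x = of_int a" by (auto simp: Fp_def)
  have "\<not> int p dvd a" using False a ch of_int_eq_0_iff_char_dvd[of a, where 'a='k] by simp
  moreover have "prime (int p)" using pr by simp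
  ultimately have "coprime (int p) a" using prime_imp_coprime by blast
  then obtain u v where uv: "u * a + v * int p = 1"
    using bezout_int[of a "int p"] by (metis coprime_iff_gcd_eq_1 gcd.commute)
  have "(of_int (int p) :: 'k) = 0" using of_nat_CHAR[where 'a='k] ch by simp
  hence "of_int u * x = 1" using arg_cong[OF uv, of "of_int :: int \<Rightarrow> 'k"] a by simp
  hence "inverse x = of_int u" by (metis inverse_unique mult.commute)
  thus ?thesis by simp
qed

lemma Fp_divide[intro]: "(x::'k) \<in> Fp \<Longrightarrow> y \<in> Fp \<Longrightarrow> x / y \<in> Fp"
  by (simp add: divide_inverse Fp_mult Fp_inverse)

lemma Gk_finite: "finite (Gk :: 'k km set)"
proof -
  have "Gk \<subseteq> Fp \<times> Fp \<times> Fp \<times> (Fp :: 'k set)" by (auto simp: Gk_def)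
  thus ?thesis using Fp_finite by (meson finite_SigmaI finite_subset)
qed

text \<open>Reduction is an isomorphism from \<open>SL2 p\<close> (integer representatives, arithmetic mod \<open>p\<close>)
  onto \<open>Gk\<close>.\<close>
lemma emb_mult: "(emb (m2_mult p x y) :: 'k km) = kmul (emb x) (emb y)"
  by (cases x; cases y) (simp add: of_int_mod_char[OF ch])
lemma emb_inv: "(emb (m2_inv p x) :: 'k km) = kinv (emb x)"
  by (cases x) (simp add: of_int_mod_char[OF ch])
lemma emb_one: "(emb m2_one :: 'k km) = kone"
  by (simp add: m2_one_def kone_def)

definition reduced :: "m2 \<Rightarrow> bool" where
  "reduced x \<longleftrightarrow> (case x of (a,b,c,d) \<Rightarrow>
     a \<in> {0..<int p} \<and> b \<in> {0..<int p} \<and> c \<in> {0..<int p} \<and> d \<in> {0..<int p})"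

lemma reduced_mult: "reduced (m2_mult p x y)"
  using p_gt1 by (cases x; cases y) (auto simp: reduced_def)

lemma emb_inj: "reduced x \<Longrightarrow> reduced y \<Longrightarrow> (emb x :: 'k km) = emb y \<Longrightarrow> x = y"
  by (cases x; cases y) (auto simp: reduced_def of_int_eq_iff_mod)

lemma SL2_iff: "x \<in> SL2 p \<longleftrightarrow> reduced x \<and> kdet (emb x :: 'k km) = 1"
proof (cases x)
  case (fields a b c d)
  have "(of_int (a*d - b*c) :: 'k) = of_int 1 \<longleftrightarrow> (a*d-b*c) mod int p = 1 mod int p"
    by (rule of_int_eq_iff_mod)
  moreover have "1 mod int p = 1" using p_gt1 by simp
  ultimately show ?thesis by (simp add: fields SL2_def reduced_def)
qed

lemma SL2_mult: "x \<in> SL2 p \<Longrightarrow> y \<in> SL2 p \<Longrightarrow> m2_mult p x y \<in> SL2 p"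
  by (simp add: SL2_iff reduced_mult emb_mult kdet_mul)

lemma SL2_inv: "x \<in> SL2 p \<Longrightarrow> m2_inv p x \<in> SL2 p"
proof -
  assume x: "x \<in> SL2 p"
  have "reduced (m2_inv p x)" using p_gt1 by (cases x) (auto simp: reduced_def)
  moreover have "kdet (emb (m2_inv p x) :: 'k km) = 1"
    using x by (simp add: emb_inv kdet_inv SL2_iff)
  ultimately show ?thesis by (simp add: SL2_iff)
qed

lemma SL2_emb: "x \<in> SL2 p \<Longrightarrow> (emb x :: 'k km) \<in> Gk"
  by (cases x) (simp add: Gk_def SL2_iff)

lemma one_SL2: "m2_one \<in> SL2 p"
  using p_gt1 by (simp add: SL2_def m2_one_def)

lemma Gk_lift:
  assumes "(X :: 'k km) \<in> Gk" obtains x where "x \<in> SL2 p" "emb x = X"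
proof -
  obtain a b c d where X: "X = (a,b,c,d)" by (cases X)
  from assms have "a \<in> Fp" "b \<in> Fp" "c \<in> Fp" "d \<in> Fp" by (auto simp: Gk_def X)
  then obtain a' b' c' d' where "a' \<in> {0..<int p}" "of_int a' = a" "b' \<in> {0..<int p}"
     "of_int b' = b" "c' \<in> {0..<int p}" "of_int c' = c" "d' \<in> {0..<int p}" "of_int d' = d"
    by (metis Fp_lift)
  moreover have "kdet X = 1" using assms by (simp add: Gk_def)
  ultimately have "(a',b',c',d') \<in> SL2 p" "emb (a',b',c',d') = X"
    by (auto simp: SL2_iff reduced_def X)
  thus ?thesis using that by blast
qed

definition unemb :: "'k km \<Rightarrow> m2" where
  "unemb X = (SOME x. x \<in> SL2 p \<and> emb x = X)"

lemma unemb: "X \<in> Gk \<Longrightarrow> unemb X \<in> SL2 p \<and> emb (unemb X) = X"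
  unfolding unemb_def by (rule someI_ex) (metis Gk_lift)

lemma unemb_emb: "x \<in> SL2 p \<Longrightarrow> unemb (emb x) = x"
  using unemb[OF SL2_emb] emb_inj by (metis SL2_iff)

lemma unemb_mult: "X \<in> Gk \<Longrightarrow> Y \<in> Gk \<Longrightarrow> unemb (kmul X Y) = m2_mult p (unemb X) (unemb Y)"
proof -
  assume X: "X \<in> Gk" and Y: "Y \<in> Gk"
  have XY: "kmul X Y \<in> Gk" using X Y Gk_mul by blast
  have "emb (unemb (kmul X Y)) = (emb (m2_mult p (unemb X) (unemb Y)) :: 'k km)"
    using unemb[OF X] unemb[OF Y] unemb[OF XY] by (simp add: emb_mult)
  moreover have "reduced (unemb (kmul X Y))" using unemb[OF XY] SL2_iff by blast
  ultimately show ?thesis using emb_inj reduced_mult by blast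
qed

lemma unemb_one: "unemb (kone :: 'k km) = m2_one"
  using unemb_emb[OF one_SL2] emb_one by simp

end

section \<open>Dimension counting inside a finitely spanned subspace\<close>

context vector_space
begin

lemma span_finite_sub:
  assumes "x \<in> span A" shows "\<exists>t. finite t \<and> t \<subseteq> A \<and> x \<in> span t"
proof -
  from assms obtain t r where "x = (\<Sum>a\<in>t. r a *s a)" "finite t" "t \<subseteq> A"
    unfolding span_explicit by blast
  moreover have "(\<Sum>a\<in>t. r a *s a) \<in> span t"
    by (intro span_sum span_scale span_base)
  ultimately show ?thesis by blast
qed

lemma telescope_power:
  assumes lin: "Vector_Spaces.linear scale scale T" and S: "subspace S" and TS: "T ` S \<subseteq> S"
    and y: "y \<in> S"
  shows "\<exists>z\<in>S. (T ^^ n) y = y + (T z - z)"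
proof -
  interpret h: module_hom scale scale T using lin module_hom_iff_linear by blast
  show ?thesis
  proof (induction n)
    case 0
    show ?case using subspace_0[OF S] by force
  next
    case (Suc n)
    then obtain z where z: "z \<in> S" "(T ^^ n) y = y + (T z - z)" by blast
    have "(T ^^ Suc n) y = y + (T (y + T z) - (y + T z))" using z(2) by (simp add: h.add h.diff)
    moreover have "y + T z \<in> S" using subspace_add[OF S y] TS z(1) by blast
    ultimately show ?case by blast
  qed
qed

text \<open>The ambient spaces need not be finite-dimensional, so the dimension facts we need are proved
  for subspaces of the span of a fixed finite set \<open>F0\<close>.\<close>
context
  fixes F0 :: "'b set"
  assumes F0: "finite F0"
begin

lemma fd_basis:
  assumes "A \<subseteq> span F0"
  obtains B where "B \<subseteq> A" "independent B" "A \<subseteq> span B" "card B = dim A" "finite B"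
proof -
  obtain B where B: "B \<subseteq> A" "independent B" "A \<subseteq> span B" "card B = dim A"
    using basis_exists by blast
  have "finite B" using independent_span_bound[OF F0 B(2)] B(1) assms by blast
  thus ?thesis using B that by blast
qed

lemma fd_indep_le:
  assumes "A \<subseteq> span F0" "independent I" "I \<subseteq> span A"
  shows "card I \<le> dim A"
proof -
  obtain B where B: "B \<subseteq> A" "independent B" "A \<subseteq> span B" "card B = dim A" "finite B"
    using fd_basis[OF assms(1)] by blast
  have "I \<subseteq> span B" using assms(3) B(3) by (metis span_mono span_span subset_trans)
  thus ?thesis using independent_span_bound[OF B(5) assms(2)] B(4) by simp
qed

lemma fd_mono:
  assumes "A \<subseteq> span C" "C \<subseteq> span F0"
  shows "dim A \<le> dim C"
proof -
  obtain B where B: "B \<subseteq> C" "independent B" "C \<subseteq> span B" "card B = dim C" "finite B"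
    using fd_basis[OF assms(2)] by blast
  have "A \<subseteq> span B" using assms(1) B(3) by (metis span_mono span_span subset_trans)
  thus ?thesis using dim_le_card[OF _ B(5)] B(4) by simp
qed

lemma fd_rank_nullity_le:
  assumes lin: "Vector_Spaces.linear scale scale f" and S: "subspace S" and SF: "S \<subseteq> span F0"
  shows "dim (f ` S) + dim {x\<in>S. f x = 0} \<le> dim S"
proof -
  interpret h: module_hom scale scale f using lin module_hom_iff_linear by blast
  let ?K = "{x\<in>S. f x = 0}"
  obtain Bk where Bk: "Bk \<subseteq> ?K" "independent Bk" "?K \<subseteq> span Bk" "card Bk = dim ?K" "finite Bk"
    using fd_basis[of ?K] SF by blast
  obtain Bs where Bs: "Bk \<subseteq> Bs" "Bs \<subseteq> S" "independent Bs" "S \<subseteq> span Bs"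
    using maximal_independent_subset_extend[of Bk S] Bk(1,2) by blast
  have fBs: "finite Bs" using independent_span_bound[OF F0 Bs(3)] Bs(2) SF by blast
  have "f ` Bs \<subseteq> span (f ` (Bs - Bk))"
  proof
    fix y assume "y \<in> f ` Bs"
    then obtain b where b: "b \<in> Bs" "y = f b" by blast
    show "y \<in> span (f ` (Bs - Bk))"
    proof (cases "b \<in> Bk")
      case True hence "f b = 0" using Bk(1) by auto
      thus ?thesis using b span_zero by simp
    next
      case False thus ?thesis using b by (intro span_base) auto
    qed
  qed
  hence "span (f ` Bs) \<subseteq> span (f ` (Bs - Bk))" by (simp add: span_minimal)
  moreover have "f ` S \<subseteq> span (f ` Bs)" using Bs(4) h.span_image by blast
  ultimately have "dim (f ` S) \<le> card (f ` (Bs - Bk))" using dim_le_card fBs by blast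
  also have "\<dots> \<le> card (Bs - Bk)" using card_image_le fBs by blast
  also have "\<dots> = card Bs - card Bk" using card_Diff_subset[OF Bk(5) Bs(1)] .
  finally show ?thesis
    using basis_card_eq_dim[OF Bs(2,4,3)] Bk(4) card_mono[OF fBs Bs(1)] by linarith
qed

lemma fd_sum:
  assumes A: "A \<subseteq> span F0" and C: "subspace C" "C \<subseteq> span F0"
    and x: "x \<in> A" "x \<in> C" "x \<noteq> 0"
  shows "dim {a + c | a c. a \<in> A \<and> c \<in> C} + 1 \<le> dim A + dim C"
proof -
  obtain Ba where Ba: "Ba \<subseteq> A" "independent Ba" "A \<subseteq> span Ba" "card Ba = dim A" "finite Ba"
    using fd_basis[OF A] by blast
  obtain Bc where Bc: "{x} \<subseteq> Bc" "Bc \<subseteq> C" "independent Bc" "C \<subseteq> span Bc"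
    using maximal_independent_subset_extend[of "{x}" C] x(2,3) by auto
  have fBc: "finite Bc" using independent_span_bound[OF F0 Bc(3)] Bc(2) C(2) by blast
  let ?D = "Ba \<union> (Bc - {x})"
  have "x \<in> span ?D" using x(1) Ba(3) by (meson Un_upper1 span_mono subsetD)
  hence "Bc \<subseteq> span ?D" by (auto intro: span_base)
  hence "C \<subseteq> span ?D" using Bc(4) by (meson span_minimal subspace_span subset_trans)
  moreover have "A \<subseteq> span ?D" using Ba(3) by (meson Un_upper1 span_mono subset_trans)
  ultimately have "{a + c | a c. a \<in> A \<and> c \<in> C} \<subseteq> span ?D" by (auto intro: span_add)
  hence "dim {a + c | a c. a \<in> A \<and> c \<in> C} \<le> card ?D" using dim_le_card Ba(5) fBc by blast
  also have "\<dots> \<le> card Ba + card (Bc - {x})" by (rule card_Un_le)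
  also have "\<dots> = card Ba + card Bc - 1"
    using Bc(1) fBc card_gt_0_iff[of Bc] by (auto simp add: card_Diff_singleton)
  finally show ?thesis
    using Ba(4) basis_card_eq_dim[OF Bc(2,4,3)] Bc(1) fBc card_0_eq[OF fBc] by fastforce
qed

lemma fd_inj_le:
  assumes lin: "Vector_Spaces.linear scale scale f" and inj: "inj f"
    and AF: "A \<subseteq> span F0" and CF: "C \<subseteq> span F0" and fAC: "f ` A \<subseteq> C"
  shows "dim A \<le> dim C"
proof -
  interpret h: module_hom scale scale f using lin module_hom_iff_linear by blast
  obtain Ba where Ba: "Ba \<subseteq> A" "independent Ba" "A \<subseteq> span Ba" "card Ba = dim A" "finite Ba"
    using fd_basis[OF AF] by blast
  have "independent (f ` Ba)" using h.independent_injective_image[OF Ba(2)] inj inj_on_subset by blast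
  moreover have "f ` Ba \<subseteq> span C" using Ba(1) fAC span_superset by blast
  ultimately have "card (f ` Ba) \<le> dim C" using fd_indep_le[OF CF] by blast
  moreover have "card (f ` Ba) = card Ba" using inj card_image inj_on_subset by blast
  ultimately show ?thesis using Ba(4) by simp
qed

text \<open>The counting argument behind injectivity.\<close>
lemma sum_with_image_direct:
  assumes V: "subspace V" "V \<subseteq> span F0"
    and linT: "Vector_Spaces.linear scale scale T" and TV: "T ` V \<subseteq> V"
    and S: "subspace S" "S \<subseteq> V"
    and linh: "Vector_Spaces.linear scale scale h" and injh: "inj h"
    and hS: "h ` S \<subseteq> {v\<in>V. T v = 0}"
    and cover: "V \<subseteq> {s + y | s y. s \<in> S \<and> y \<in> T ` V}"
    and x: "x \<in> S" "x \<in> T ` V"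
  shows "x = 0"
proof (rule ccontr)
  assume x0: "x \<noteq> 0"
  interpret hT: module_hom scale scale T using linT module_hom_iff_linear by blast
  let ?K = "{v\<in>V. T v = 0}"
  have SF: "S \<subseteq> span F0" and TF: "T ` V \<subseteq> span F0" and KF: "?K \<subseteq> span F0"
    using S(2) TV V(2) by auto
  have "{s + y | s y. s \<in> S \<and> y \<in> T ` V} \<subseteq> V"
    using S(2) TV V(1) subspace_add by blast
  hence cover_dim: "dim V \<le> dim {s + y | s y. s \<in> S \<and> y \<in> T ` V}"
    using cover V(2) by (intro fd_mono) (auto intro: span_base)
  have not_direct: "dim {s + y | s y. s \<in> S \<and> y \<in> T ` V} + 1 \<le> dim S + dim (T ` V)"
    by (rule fd_sum[OF SF hT.subspace_image[OF V(1)] TF x x0])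
  have embed: "dim S \<le> dim ?K" by (rule fd_inj_le[OF linh injh SF KF hS])
  have rank_nullity: "dim ?K + dim (T ` V) \<le> dim V"
    using fd_rank_nullity_le[OF linT V] by simp
  from cover_dim not_direct embed rank_nullity show False by linarith
qed

end

end

section \<open>Representations of \<open>Gk\<close>\<close>

locale krep = vector_space scale
  for scale :: "'k::field \<Rightarrow> 'v::ab_group_add \<Rightarrow> 'v" +
  fixes p :: nat and R :: "'k km \<Rightarrow> 'v \<Rightarrow> 'v"
  assumes pr: "prime p" and ch: "CHAR('k) = p"
    and lin: "X \<in> Gk \<Longrightarrow> Vector_Spaces.linear scale scale (R X)"
    and hom: "X \<in> Gk \<Longrightarrow> Y \<in> Gk \<Longrightarrow> R (kmul X Y) = R X \<circ> R Y"
    and one: "R kone = id"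
begin

lemma R_hom: "X \<in> Gk \<Longrightarrow> Y \<in> Gk \<Longrightarrow> R X (R Y w) = R (kmul X Y) w"
  using hom by simp

lemma R_mh: "X \<in> Gk \<Longrightarrow> module_hom scale scale (R X)"
  using lin module_hom_iff_linear[of scale scale "R X"] by simp

lemma R_add: "X \<in> Gk \<Longrightarrow> R X (a + b) = R X a + R X b"
  by (rule module_hom.add[OF R_mh])
lemma R_scale: "X \<in> Gk \<Longrightarrow> R X (scale c a) = scale c (R X a)"
  by (rule module_hom.scale[OF R_mh])
lemma R_zero: "X \<in> Gk \<Longrightarrow> R X 0 = 0"
  by (rule module_hom.zero[OF R_mh])
lemma R_sum: "X \<in> Gk \<Longrightarrow> R X (sum f I) = (\<Sum>i\<in>I. R X (f i))"
  by (rule module_hom.sum[OF R_mh])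

lemma R_inv_l: assumes X: "X \<in> Gk" shows "R (kinv X) (R X w) = w"
  using R_hom[OF Gk_inv[OF X] X] kmul_inv_l[OF Gk_det[OF X]] by (simp add: one)

lemma R_inj: "X \<in> Gk \<Longrightarrow> inj (R X)"
  by (rule inj_on_inverseI[of _ "R (kinv X)"]) (rule R_inv_l)

text \<open>Twisting by an inner automorphism gives again a representation; this is how we move the
  subgroup \<open>N'\<close> to the standard unipotent group.\<close>
lemma twisted:
  assumes G: "G \<in> Gk" shows "krep scale p (\<lambda>X. R (conjk G X))"
proof (unfold krep_def krep_axioms_def, intro conjI allI impI)
  show "vector_space scale" "prime p" "CHAR('k) = p" by (rule vector_space_axioms pr ch)+
next
  fix X :: "'k km" assume X: "X \<in> Gk"
  show "Vector_Spaces.linear scale scale (R (conjk G X))" by (rule lin[OF conjk_Gk[OF G X]])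
next
  fix X Y :: "'k km" assume X: "X \<in> Gk" and Y: "Y \<in> Gk"
  show "R (conjk G (kmul X Y)) = R (conjk G X) \<circ> R (conjk G Y)"
    using hom[OF conjk_Gk[OF G X] conjk_Gk[OF G Y]] conjk_mul[OF Gk_det[OF G]] by simp
next
  show "R (conjk G kone) = id" using conjk_kone[OF Gk_det[OF G]] one by simp
qed

lemma U1: "Uk 1 \<in> Gk" by (simp add: Uk_Gk)

lemma conj_pow:
  assumes G: "G \<in> Gk"
  shows "R (conjk G (Uk (of_nat n))) = R (conjk G (Uk 1)) ^^ n"
proof (induction n)
  case 0
  thus ?case using conjk_kone[OF Gk_det[OF G]] by (simp add: Uk_0 one)
next
  case (Suc n)
  have "conjk G (Uk (of_nat (Suc n) :: 'k)) = kmul (conjk G (Uk (of_nat n))) (conjk G (Uk 1))"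
    using conjk_mul[OF Gk_det[OF G], of "Uk (of_nat n)" "Uk 1"] by (simp add: Uk_add add.commute)
  hence "R (conjk G (Uk (of_nat (Suc n)))) = R (conjk G (Uk (of_nat n))) \<circ> R (conjk G (Uk 1))"
    by (simp only:) (rule hom[OF conjk_Gk[OF G Uk_Gk[OF Fp_of_nat]] conjk_Gk[OF G U1]])
  thus ?case using Suc by (simp only: funpow_Suc_right)
qed

text \<open>\<open>A\<close> generates the standard unipotent group \<open>U\<close>; \<open>I0 = W\<^sup>U\<close> is its fixed space.\<close>
definition A :: "'v \<Rightarrow> 'v" where "A = R (Uk 1)"
definition I0 :: "'v set" where "I0 = {w. A w = w}"

lemma R_Uk_pow: "R (Uk (of_nat n)) = A ^^ n"
  using conj_pow[OF Gk_one] by (simp add: A_def)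

lemma A_p: "A ^^ p = id"
proof -
  have "(of_nat p :: 'k) = 0" using of_nat_CHAR[where 'a='k] ch by simp
  thus ?thesis using R_Uk_pow[of p] by (simp add: Uk_0 one)
qed

lemma I0_Uk: assumes "t \<in> Fp" "m \<in> I0" shows "R (Uk t) m = m"
proof -
  obtain n where "t = of_nat n" using Fp_nat[OF pr ch assms(1)] by blast
  moreover have "(A ^^ n) m = m" using assms(2) by (induction n) (auto simp: I0_def)
  ultimately show ?thesis using R_Uk_pow by simp
qed

lemma I0_sub: "subspace I0"
  unfolding subspace_def I0_def A_def by (simp add: R_zero[OF U1] R_add[OF U1] R_scale[OF U1])

text \<open>The upper triangular Borel subgroup normalises \<open>U\<close>, hence preserves \<open>W\<^sup>U\<close>.\<close>
lemma upper_I0: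
  assumes Y: "(y1, y2, 0, y4) \<in> Gk" and m: "m \<in> I0"
  shows "R (y1, y2, 0, y4) m \<in> I0"
proof -
  let ?Y = "(y1, y2, 0, y4) :: 'k km"
  have "y1 * y4 = 1" using Y by (simp add: Gk_def)
  hence y1: "y1 \<noteq> 0" by auto
  have s: "y4 / y1 \<in> Fp" using Y Fp_divide[OF pr ch] by (auto simp: Gk_def)
  have "kmul (Uk 1) ?Y = kmul ?Y (Uk (y4 / y1))" using y1 by (simp add: Uk_def)
  hence "A (R ?Y m) = R ?Y (R (Uk (y4/y1)) m)" unfolding A_def
    using R_hom[OF U1 Y] R_hom[OF Y Uk_Gk[OF s]] by simp
  also have "\<dots> = R ?Y m" using I0_Uk[OF s m] by simp
  finally show ?thesis by (simp add: I0_def)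
qed

lemma orbit_sum_I0: "(\<Sum>i<p. (A ^^ i) y) \<in> I0"
proof -
  obtain q where q: "p = Suc q" using p_gt1[OF pr ch] by (cases p) auto
  have "A (\<Sum>i<p. (A ^^ i) y) = (\<Sum>i<p. A ((A ^^ i) y))" unfolding A_def by (rule R_sum[OF U1])
  also have "\<dots> = (\<Sum>i<q. (A ^^ Suc i) y) + (A ^^ p) y" unfolding q by simp
  also have "\<dots> = (\<Sum>i<q. (A ^^ Suc i) y) + y" using A_p by simp
  also have "\<dots> = (\<Sum>i<p. (A ^^ i) y)" unfolding q sum.lessThan_Suc_shift by simp
  finally show ?thesis by (simp add: I0_def)
qed

definition Gen :: "'v set \<Rightarrow> 'v set" where "Gen F = {R X f | X f. X \<in> Gk \<and> f \<in> F}"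
definition SF :: "'v set \<Rightarrow> 'v set" where "SF F = span (Gen F)"

lemma SF_sub: "subspace (SF F)" unfolding SF_def by simp

lemma Gen_SF: "X \<in> Gk \<Longrightarrow> f \<in> F \<Longrightarrow> R X f \<in> SF F"
  unfolding SF_def Gen_def by (rule span_base) blast

lemma SF_stable: assumes X: "X \<in> Gk" and y: "y \<in> SF F" shows "R X y \<in> SF F"
proof -
  interpret h: module_hom scale scale "R X" using R_mh[OF X] .
  have "R X ` Gen F \<subseteq> Gen F"
  proof
    fix y assume "y \<in> R X ` Gen F"
    then obtain Y f where "Y \<in> Gk" "f \<in> F" "y = R X (R Y f)" unfolding Gen_def by blast
    hence "y = R (kmul X Y) f" using R_hom X by simp
    thus "y \<in> Gen F" unfolding Gen_def using Gk_mul[OF X \<open>Y \<in> Gk\<close>] \<open>f \<in> F\<close> by blast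
  qed
  hence "span (R X ` Gen F) \<subseteq> SF F" unfolding SF_def by (rule span_mono)
  moreover have "R X y \<in> span (R X ` Gen F)" using y h.span_image unfolding SF_def by blast
  ultimately show ?thesis by blast
qed

lemma Gen_finite_support:
  assumes "finite t" "t \<subseteq> Gen I"
  obtains F where "finite F" "F \<subseteq> I" "t \<subseteq> Gen F"
proof -
  from assms(2) have "\<forall>y\<in>t. \<exists>f. f \<in> I \<and> (\<exists>X\<in>Gk. y = R X f)" unfolding Gen_def by blast
  then obtain \<phi> where "\<forall>y\<in>t. \<phi> y \<in> I \<and> (\<exists>X\<in>Gk. y = R X (\<phi> y))" by metis
  hence "finite (\<phi> ` t)" "\<phi> ` t \<subseteq> I" "t \<subseteq> Gen (\<phi> ` t)"
    using assms(1) unfolding Gen_def by blast+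
  thus ?thesis using that by blast
qed

lemma Gen_finite: "finite F \<Longrightarrow> finite (Gen F)"
proof -
  assume "finite F"
  moreover have "Gen F = (\<Union>f\<in>F. (\<lambda>X. R X f) ` Gk)" unfolding Gen_def by blast
  ultimately show ?thesis using Gk_finite[OF pr ch] by simp
qed

end

section \<open>The core: \<open>W = W\<^sup>U \<oplus> (B - 1) W\<close>\<close>

text \<open>Fix \<open>H = (a,b;c,d) \<in> Gk\<close> with \<open>c \<noteq> 0\<close>, i.e. \<open>H\<close> outside the upper triangular Borel, and let
  \<open>B\<close> act as the generator \<open>H A H\<inverse>\<close> of \<open>N = H U H\<inverse>\<close>.\<close>
context krep
begin

context
  fixes a b c d :: 'k
  assumes HG: "(a,b,c,d) \<in> Gk" and c0: "c \<noteq> 0"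
begin

abbreviation "H \<equiv> (a,b,c,d)"
abbreviation "Vh t \<equiv> conjk H (Uk t)"
abbreviation "Bop \<equiv> R (Vh 1)"

lemma Vh_eq: "Vh t = (1 - a*c*t, a*a*t, - (c*c*t), 1 + a*c*t)"
proof -
  have dH: "a * d - b * c = 1" using HG by (simp add: Gk_def)
  have "Vh t = (a * d + (a * t + b) * - c, a * - b + (a * t + b) * a,
                c * d + (c * t + d) * - c, c * - b + (c * t + d) * a)"
    by (simp add: conjk_def Uk_def)
  moreover have "a * d + (a * t + b) * - c = 1 - a*c*t" using dH by algebra
  moreover have "a * - b + (a * t + b) * a = a*a*t" by algebra
  moreover have "c * d + (c * t + d) * - c = - (c*c*t)" by algebra
  moreover have "c * - b + (c * t + d) * a = 1 + a*c*t" using dH by algebra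
  ultimately show ?thesis by simp
qed

lemma Vh_Gk: "t \<in> Fp \<Longrightarrow> Vh t \<in> Gk" by (simp add: conjk_Gk HG Uk_Gk)
lemma V1: "Vh 1 \<in> Gk" by (simp add: Vh_Gk)

text \<open>\<open>H\<close> intertwines \<open>A\<close> and \<open>B\<close>; hence it maps \<open>W\<^sup>U\<close> into \<open>ker (B - 1)\<close>.\<close>
lemma B_H: "Bop (R H m) = R H (A m)"
proof -
  have "kmul (Vh 1) H = kmul H (Uk 1)"
    using kmul_inv_l[OF Gk_det[OF HG]] by (simp add: conjk_def kmul_assoc)
  thus ?thesis unfolding A_def using R_hom[OF V1 HG] R_hom[OF HG U1] by simp
qed

text \<open>\<open>Delta = B - 1\<close>, whose image is the span of the \<open>n w - w\<close>, \<open>n \<in> N\<close>.\<close>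
abbreviation Delta :: "'v \<Rightarrow> 'v" where "Delta z \<equiv> Bop z - z"

lemma Delta_linear: "Vector_Spaces.linear scale scale Delta"
proof -
  interpret B: module_hom scale scale Bop by (rule R_mh[OF V1])
  show ?thesis
    unfolding linear_iff using vector_space_axioms
    by (simp add: B.add B.scale scale_right_diff_distrib)
qed

lemma Delta_SF: "z \<in> SF F \<Longrightarrow> Delta z \<in> SF F"
  using SF_stable[OF V1] subspace_diff[OF SF_sub] by blast

text \<open>\<open>TF F = (SF F \<inter> W\<^sup>U) + Delta (SF F)\<close>; surjectivity will be the statement \<open>SF F \<subseteq> TF F\<close>.\<close>
definition TF :: "'v set \<Rightarrow> 'v set" where
  "TF F = {s + y | s y. s \<in> SF F \<inter> I0 \<and> y \<in> Delta ` SF F}"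

lemma TF_I: "m \<in> SF F \<Longrightarrow> m \<in> I0 \<Longrightarrow> z \<in> SF F \<Longrightarrow> m + Delta z \<in> TF F"
  unfolding TF_def by blast

lemma TF_sub: "subspace (TF F)"
proof -
  interpret D: module_hom scale scale Delta
    using Delta_linear module_hom_iff_linear by blast
  show ?thesis unfolding TF_def
    by (rule subspace_sums[OF subspace_inter[OF SF_sub I0_sub] D.subspace_image[OF SF_sub]])
qed

lemma TF_I0: "m \<in> SF F \<Longrightarrow> m \<in> I0 \<Longrightarrow> m \<in> TF F"
  using TF_I[of m F 0] subspace_0[OF SF_sub] R_zero[OF V1] by simp

lemma TF_Bpow: assumes "y \<in> SF F" "y \<in> I0" shows "(Bop ^^ n) y \<in> TF F"
proof -
  have "Bop ` SF F \<subseteq> SF F" using SF_stable[OF V1] by blast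
  then obtain z where "z \<in> SF F" "(Bop ^^ n) y = y + Delta z"
    using telescope_power[OF lin[OF V1] SF_sub _ assms(1)] by blast
  thus ?thesis using TF_I[OF assms] by simp
qed

text \<open>Surjectivity, first case: if \<open>X \<notin> N \<cdot> Borel\<close> (i.e. \<open>a x3 \<noteq> c x1\<close>), some \<open>n \<in> N\<close> moves \<open>X\<close>
  into the upper triangular Borel, which preserves \<open>W\<^sup>U\<close>; so \<open>X f \<in> n\<inverse> W\<^sup>U\<close>.\<close>
lemma gen_generic:
  assumes X: "(x1, x2, x3, x4) \<in> Gk" and Dx: "a * x3 - c * x1 \<noteq> 0"
    and FI: "F \<subseteq> I0" and f: "f \<in> F"
  shows "R (x1, x2, x3, x4) f \<in> TF F"
proof -
  let ?X = "(x1, x2, x3, x4) :: 'k km"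
  define t where "t = - x3 / ((a * x3 - c * x1) * c)"
  have tF: "t \<in> Fp" unfolding t_def using X HG
    by (intro Fp_uminus Fp_divide[OF pr ch] Fp_mult Fp_diff) (auto simp: Gk_def)
  obtain y1 y2 y3 y4 where Y: "kmul (Vh t) ?X = (y1, y2, y3, y4)" by (cases "kmul (Vh t) ?X")
  have "y3 = x3 + c * t * (a * x3 - c * x1)" using Y by (simp add: Vh_eq algebra_simps)
  also have "\<dots> = 0" unfolding t_def using c0 Dx by (simp add: field_simps)
  finally have y3: "y3 = 0" .
  hence YG: "(y1, y2, 0, y4) \<in> Gk" using Gk_mul[OF Vh_Gk[OF tF] X] Y by simp
  let ?y = "R (y1, y2, 0, y4) f"
  have yI: "?y \<in> I0" using upper_I0[OF YG] FI f by blast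
  have yS: "?y \<in> SF F" by (rule Gen_SF[OF YG f])
  have "R (Vh (- t)) ?y = R (Vh (- t)) (R (Vh t) (R ?X f))"
    using R_hom[OF Vh_Gk[OF tF] X] Y y3 by simp
  also have "\<dots> = R ?X f" using R_inv_l[OF Vh_Gk[OF tF]] by (simp add: kinv_conjk kinv_Uk)
  finally have "R ?X f = R (Vh (- t)) ?y" ..
  moreover obtain n where "- t = of_nat n" using Fp_nat[OF pr ch Fp_uminus[OF tF]] by blast
  ultimately show ?thesis using TF_Bpow[OF yS yI] conj_pow[OF HG] by simp
qed

text \<open>Surjectivity, second case: if \<open>X \<in> N \<cdot> Borel\<close>, all other points \<open>u X\<close> of its \<open>U\<close>-orbit
  are generic.\<close>
lemma gen_orbit:
  assumes X: "(x1, x2, x3, x4) \<in> Gk" and deg: "a * x3 - c * x1 = 0"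
    and FI: "F \<subseteq> I0" and f: "f \<in> F" and i: "0 < i" "i < p"
  shows "R (kmul (Uk (of_nat i)) (x1, x2, x3, x4)) f \<in> TF F"
proof -
  have x3: "x3 \<noteq> 0"
  proof
    assume "x3 = 0"
    hence "x1 = 0" using deg c0 by simp
    thus False using X \<open>x3 = 0\<close> by (simp add: Gk_def)
  qed
  have ne: "(of_nat i :: 'k) \<noteq> 0"
  proof
    assume "(of_nat i :: 'k) = 0"
    hence "p dvd i" using ch of_nat_eq_0_iff_char_dvd[of i, where 'a='k] by simp
    thus False using i by (simp add: nat_dvd_not_less)
  qed
  have "a * x3 - c * (x1 + of_nat i * x3) = - (c * of_nat i * x3)"
    using deg by (simp add: algebra_simps)
  hence generic: "a * x3 - c * (x1 + of_nat i * x3) \<noteq> 0" using c0 ne x3 by simp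
  have e: "kmul (Uk (of_nat i)) (x1, x2, x3, x4) = (x1 + of_nat i * x3, x2 + of_nat i * x4, x3, x4)"
    by (simp add: Uk_def)
  show ?thesis
    using gen_generic[OF Gk_mul[OF Uk_Gk[OF Fp_of_nat[of i]] X, unfolded e] generic FI f] e by simp
qed

text \<open>Surjectivity on generators: in the second case the orbit sum \<open>\<sigma>\<close> of \<open>y = X f\<close> is
  \<open>U\<close>-invariant, and \<open>y\<close> is \<open>\<sigma>\<close> minus the generic orbit points.\<close>
lemma gen_all:
  assumes X: "X \<in> Gk" and FI: "F \<subseteq> I0" and f: "f \<in> F"
  shows "R X f \<in> TF F"
proof -
  obtain x1 x2 x3 x4 where Xe: "X = (x1, x2, x3, x4)" by (cases X)
  show ?thesis
  proof (cases "a * x3 - c * x1 = 0")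
    case False thus ?thesis using gen_generic X Xe FI f by simp
  next
    case True
    obtain q where q: "p = Suc q" using p_gt1[OF pr ch] by (cases p) auto
    have orbit: "R (kmul (Uk (of_nat (Suc i))) X) f \<in> TF F" if "i < q" for i
      using gen_orbit[OF X[unfolded Xe] True FI f, of "Suc i"] Xe that q by simp
    define y where "y = R X f"
    have pw: "(A ^^ i) y = R (kmul (Uk (of_nat i)) X) f" for i
      using R_Uk_pow[of i, symmetric] R_hom[OF Uk_Gk[OF Fp_of_nat[of i]] X] unfolding y_def by simp
    define \<sigma> where "\<sigma> = (\<Sum>i<p. (A ^^ i) y)"
    have "\<sigma> \<in> SF F"
      unfolding \<sigma>_def pw by (rule subspace_sum[OF SF_sub]) (rule Gen_SF[OF Gk_mul[OF Uk_Gk X] f], simp)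
    hence "\<sigma> \<in> TF F" using TF_I0 orbit_sum_I0 unfolding \<sigma>_def by blast
    moreover have "(\<Sum>i<q. R (kmul (Uk (of_nat (Suc i))) X) f) \<in> TF F"
      by (rule subspace_sum[OF TF_sub]) (use orbit in auto)
    moreover have "y = \<sigma> - (\<Sum>i<q. R (kmul (Uk (of_nat (Suc i))) X) f)"
      unfolding \<sigma>_def q sum.lessThan_Suc_shift pw by (simp add: Uk_0 y_def)
    ultimately show ?thesis using subspace_diff[OF TF_sub] unfolding y_def by metis
  qed
qed

lemma SF_TF: "F \<subseteq> I0 \<Longrightarrow> SF F \<subseteq> TF F"
  unfolding SF_def using gen_all by (intro span_minimal[OF _ TF_sub]) (auto simp: Gen_def)

lemma core_surj:
  assumes gen: "span (Gen I0) = UNIV"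
  shows "\<exists>m\<in>I0. \<exists>z. w = m + Delta z"
proof -
  have "w \<in> TF I0" using SF_TF[of I0] gen unfolding SF_def by auto
  thus ?thesis unfolding TF_def by blast
qed

text \<open>A witness \<open>z\<close> lies in the submodule generated by
  finitely many invariants; this is finitely spanned, and the counting lemma applies to it, with
  \<open>H\<close> embedding its \<open>U\<close>-invariants into \<open>ker (B - 1)\<close>.\<close>
lemma core_inj:
  assumes gen: "span (Gen I0) = UNIV" and mI: "m \<in> I0" and mz: "m = Delta z"
  shows "m = 0"
proof -
  obtain t where "finite t" "t \<subseteq> Gen I0" "z \<in> span t"
    using span_finite_sub[of z "Gen I0"] gen by blast
  then obtain F where F: "finite F" "F \<subseteq> I0" "z \<in> SF F"
    using Gen_finite_support span_mono unfolding SF_def by (metis subsetD)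
  have H_ker: "R H ` (SF F \<inter> I0) \<subseteq> {v \<in> SF F. Delta v = 0}"
    using B_H SF_stable[OF HG] by (auto simp: I0_def)
  show ?thesis
  proof (rule sum_with_image_direct[OF Gen_finite[OF F(1)] SF_sub _ Delta_linear _
        subspace_inter[OF SF_sub I0_sub] _ lin[OF HG] R_inj[OF HG] H_ker])
    show "SF F \<subseteq> span (Gen F)" unfolding SF_def ..
    show "Delta ` SF F \<subseteq> SF F" using Delta_SF by blast
    show "SF F \<inter> I0 \<subseteq> SF F" by blast
    show "SF F \<subseteq> {s + y |s y. s \<in> SF F \<inter> I0 \<and> y \<in> Delta ` SF F}"
      using SF_TF[OF F(2)] unfolding TF_def .
    show "m \<in> SF F \<inter> I0" "m \<in> Delta ` SF F" using mI mz F(3) Delta_SF by auto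
  qed
qed

end

end

section \<open>From \<open>SL2 p\<close> to \<open>Gk\<close>\<close>

definition Rof :: "nat \<Rightarrow> (m2 \<Rightarrow> 'v \<Rightarrow> 'v) \<Rightarrow> 'k::field km \<Rightarrow> 'v \<Rightarrow> 'v" where
  "Rof p \<rho> X = \<rho> (unemb p X)"

lemma krepI:
  assumes pr: "prime p" and ch: "CHAR('k::field) = p" and rep: "is_rep p scale \<rho>"
  shows "krep scale p (Rof p \<rho> :: 'k km \<Rightarrow> 'v::ab_group_add \<Rightarrow> 'v)"
proof (unfold krep_def krep_axioms_def, intro conjI allI impI pr ch)
  show "vector_space scale" using rep by (simp add: is_rep_def)
next
  fix X :: "'k km" assume X: "X \<in> Gk"
  show "Vector_Spaces.linear scale scale (Rof p \<rho> X)"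
    using rep unemb[OF pr ch X] by (simp add: is_rep_def Rof_def)
next
  fix X Y :: "'k km" assume X: "X \<in> Gk" and Y: "Y \<in> Gk"
  show "Rof p \<rho> (kmul X Y) = Rof p \<rho> X \<circ> Rof p \<rho> Y"
    using rep unemb[OF pr ch X] unemb[OF pr ch Y] unemb_mult[OF pr ch X Y]
    unfolding is_rep_def Rof_def by simp
next
  show "Rof p \<rho> (kone :: 'k km) = id"
    using rep unemb_one[OF pr ch] unfolding is_rep_def Rof_def by (simp add: id_def)
qed

lemma Rof_emb:
  assumes "prime p" "CHAR('k::field) = p" "x \<in> SL2 p"
  shows "\<rho> x = Rof p \<rho> (emb x :: 'k km)"
  using unemb_emb[OF assms] by (simp add: Rof_def)

definition conjset :: "nat \<Rightarrow> m2 \<Rightarrow> m2 set" where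
  "conjset p g = (\<lambda>u. m2_mult p (m2_mult p g u) (m2_inv p g)) ` U_std p"

lemma unip_rad_borel_conjset: "unip_rad_borel p N \<longleftrightarrow> (\<exists>g\<in>SL2 p. N = conjset p g)"
  unfolding unip_rad_borel_def conjset_def ..

lemma conjset_elem:
  assumes pr: "prime p" and ch: "CHAR('k::field) = p" and g: "g \<in> SL2 p" and n: "n \<in> conjset p g"
  shows "n \<in> SL2 p \<and> (\<exists>j. (emb n :: 'k km) = conjk (emb g) (Uk (of_nat j)))"
proof -
  obtain b where b: "b \<in> {0..<int p}" "n = m2_mult p (m2_mult p g (1, b, 0, 1)) (m2_inv p g)"
    using n by (auto simp: conjset_def U_std_def)
  have "(1, b, 0, 1) \<in> SL2 p" using b(1) p_gt1[OF pr ch] by (simp add: SL2_def)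
  hence "n \<in> SL2 p" using b(2) g SL2_mult[OF pr ch] SL2_inv[OF pr ch] by metis
  moreover have "(emb n :: 'k km) = conjk (emb g) (Uk (of_nat (nat b)))"
    using b by (simp add: emb_mult[OF pr ch] emb_inv[OF pr ch] conjk_def Uk_def)
  ultimately show ?thesis by blast
qed

lemma conjset_gen:
  assumes pr: "prime p" and ch: "CHAR('k::field) = p" and g: "g \<in> SL2 p"
  obtains n where "n \<in> conjset p g" "(emb n :: 'k km) = conjk (emb g) (Uk 1)"
proof
  show "m2_mult p (m2_mult p g (1,1,0,1)) (m2_inv p g) \<in> conjset p g"
    using p_gt1[OF pr ch] by (auto simp: conjset_def U_std_def)
  show "(emb (m2_mult p (m2_mult p g (1,1,0,1)) (m2_inv p g)) :: 'k km) = conjk (emb g) (Uk 1)"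
    by (simp add: emb_mult[OF pr ch] emb_inv[OF pr ch] conjk_def Uk_def)
qed

lemma conjset_sub:
  assumes pr: "prime p" and ch: "CHAR('k::field) = p" and g: "g \<in> SL2 p" and g': "g' \<in> SL2 p"
    and K: "(k1, k2, 0, k4) \<in> (Gk :: 'k km set)" and e: "(emb g :: 'k km) = kmul (emb g') (k1, k2, 0, k4)"
  shows "conjset p g \<subseteq> conjset p g'"
proof
  fix n assume n: "n \<in> conjset p g"
  obtain b where b: "b \<in> {0..<int p}" "n = m2_mult p (m2_mult p g (1, b, 0, 1)) (m2_inv p g)"
    using n by (auto simp: conjset_def U_std_def)
  have k14: "k1 * k4 = 1" using K by (simp add: Gk_def)
  have "k1 * k1 * of_int b \<in> (Fp :: 'k set)" using K by (intro Fp_mult) (auto simp: Gk_def)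
  then obtain b' where b': "b' \<in> {0..<int p}" "of_int b' = k1 * k1 * (of_int b :: 'k)"
    using Fp_lift[OF pr ch] by blast
  define n' where "n' = m2_mult p (m2_mult p g' (1, b', 0, 1)) (m2_inv p g')"
  have n'N: "n' \<in> conjset p g'" unfolding n'_def conjset_def U_std_def using b' by auto
  have "(emb n :: 'k km) = conjk (emb g) (Uk (of_int b))"
    using b by (simp add: emb_mult[OF pr ch] emb_inv[OF pr ch] conjk_def Uk_def)
  also have "\<dots> = conjk (emb g') (conjk (k1, k2, 0, k4) (Uk (of_int b)))" unfolding e conjk_conjk ..
  also have "\<dots> = conjk (emb g') (Uk (of_int b'))" using conjk_upper[OF k14] b' by simp
  also have "\<dots> = emb n'"
    unfolding n'_def by (simp add: emb_mult[OF pr ch] emb_inv[OF pr ch] conjk_def Uk_def)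
  finally have "n = n'" using emb_inj[OF pr ch] reduced_mult[OF pr ch] unfolding b(2) n'_def by blast
  thus "n \<in> conjset p g'" using n'N by simp
qed

lemma distinct_radicals:
  assumes pr: "prime p" and ch: "CHAR('k::field) = p" and g: "g \<in> SL2 p" and g': "g' \<in> SL2 p"
    and NN: "conjset p g \<noteq> conjset p g'"
  obtains a b c d where "kmul (kinv (emb g')) (emb g :: 'k km) = (a, b, c, d)" "c \<noteq> 0"
proof -
  let ?G0 = "emb g :: 'k km" and ?G1 = "emb g' :: 'k km"
  have G0: "?G0 \<in> Gk" and G1: "?G1 \<in> Gk" using SL2_emb[OF pr ch] g g' by blast+
  obtain a b c d where H: "kmul (kinv ?G1) ?G0 = (a, b, c, d)" by (cases "kmul (kinv ?G1) ?G0")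
  have HG: "(a, b, c, d) \<in> Gk" using Gk_mul[OF Gk_inv[OF G1] G0] H by simp
  have "c \<noteq> 0"
  proof
    assume c: "c = 0"
    have "kmul ?G1 (a, b, c, d) = ?G0"
      unfolding H[symmetric] kmul_assoc[symmetric] using kmul_inv_r[OF Gk_det[OF G1]] by simp
    hence "conjset p g \<subseteq> conjset p g'"
      using conjset_sub[OF pr ch g g'] HG c by simp
    moreover have "kmul ?G0 (kinv (a, b, c, d)) = ?G1"
      unfolding H[symmetric] kinv_mul kinv_kinv kmul_assoc[symmetric]
      using kmul_inv_r[OF Gk_det[OF G0]] by simp
    hence "conjset p g' \<subseteq> conjset p g"
      using conjset_sub[OF pr ch g' g] Gk_inv[OF HG] c by simp
    ultimately show False using NN by blast
  qed
  thus ?thesis using H that by blast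
qed

section \<open>Invariants and coinvariants of a unipotent radical\<close>

context krep
begin

lemma generated_twisted:
  assumes rho: "\<And>x. x \<in> SL2 p \<Longrightarrow> \<rho> x = R (emb x)" and G: "G \<in> Gk"
  shows "span {\<rho> x w | x w. x \<in> SL2 p \<and> w \<in> I} \<subseteq> span {R (conjk G X) w | X w. X \<in> Gk \<and> w \<in> I}"
proof (rule span_mono, clarify)
  fix x w assume x: "x \<in> SL2 p" and w: "w \<in> I"
  have "conjk G (conjk (kinv G) (emb x)) = emb x"
    unfolding conjk_conjk[symmetric] kmul_inv_r[OF Gk_det[OF G]] by simp
  hence "\<rho> x w = R (conjk G (conjk (kinv G) (emb x))) w" using rho[OF x] by simp
  thus "\<exists>X v. \<rho> x w = R (conjk G X) v \<and> X \<in> Gk \<and> v \<in> I"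
    using w conjk_Gk[OF Gk_inv[OF G] SL2_emb[OF pr ch x]] by blast
qed

context
  fixes \<rho> :: "m2 \<Rightarrow> 'v \<Rightarrow> 'v" and g :: m2
  assumes rho: "\<And>x. x \<in> SL2 p \<Longrightarrow> \<rho> x = R (emb x)" and g: "g \<in> SL2 p"
begin

abbreviation Bg :: "'v \<Rightarrow> 'v" where "Bg \<equiv> R (conjk (emb g) (Uk 1))"

lemma Bg_Gk: "conjk (emb g :: 'k km) (Uk 1) \<in> Gk"
  by (rule conjk_Gk[OF SL2_emb[OF pr ch g] U1])

lemma rho_conjset:
  assumes "n \<in> conjset p g" obtains j where "\<rho> n = Bg ^^ j"
proof -
  obtain j where "n \<in> SL2 p" "(emb n :: 'k km) = conjk (emb g) (Uk (of_nat j))"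
    using conjset_elem[OF pr ch g assms] by blast
  hence "\<rho> n = Bg ^^ j" using rho conj_pow[OF SL2_emb[OF pr ch g]] by simp
  thus ?thesis using that by blast
qed

lemma rho_conjset_gen: "\<exists>n\<in>conjset p g. \<rho> n = Bg"
proof -
  obtain n where n: "n \<in> conjset p g" "(emb n :: 'k km) = conjk (emb g) (Uk 1)"
    using conjset_gen[OF pr ch g] by blast
  have "n \<in> SL2 p" using conjset_elem[OF pr ch g n(1)] by blast
  thus ?thesis using n rho by metis
qed

lemma invariants_conjset: "invariants \<rho> (conjset p g) = {w. Bg w = w}"
proof (intro set_eqI iffI)
  fix w assume "w \<in> invariants \<rho> (conjset p g)"
  thus "w \<in> {w. Bg w = w}" using rho_conjset_gen by (auto simp: invariants_def)
next
  fix w assume w: "w \<in> {w. Bg w = w}"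
  have "(Bg ^^ j) w = w" for j using w by (induction j) auto
  thus "w \<in> invariants \<rho> (conjset p g)"
    unfolding invariants_def by (auto elim: rho_conjset)
qed

text \<open>The span of the \<open>n w - w\<close>, \<open>n \<in> g U g\<inverse>\<close>, is the image of \<open>Bg - 1\<close>: that image is a subspace
  containing \<open>Bg w - w\<close>, and it contains \<open>Bg\<^sup>j w - w\<close> by telescoping.\<close>
lemma coinv_rel_conjset: "coinv_rel scale \<rho> (conjset p g) = range (\<lambda>z. Bg z - z)"
proof
  interpret B: module_hom scale scale Bg by (rule R_mh[OF Bg_Gk])
  interpret D: module_hom scale scale "\<lambda>z. Bg z - z"
    unfolding module_hom_iff_linear linear_iff using vector_space_axioms
    by (simp add: B.add B.scale scale_right_diff_distrib)
  have "{\<rho> n w - w | n w. n \<in> conjset p g} \<subseteq> range (\<lambda>z. Bg z - z)"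
  proof clarify
    fix n w assume "n \<in> conjset p g"
    then obtain j where "\<rho> n = Bg ^^ j" using rho_conjset by blast
    moreover obtain z where "(Bg ^^ j) w = w + (Bg z - z)"
      using telescope_power[OF lin[OF Bg_Gk] subspace_UNIV] by blast
    ultimately show "\<rho> n w - w \<in> range (\<lambda>z. Bg z - z)" by simp
  qed
  thus "coinv_rel scale \<rho> (conjset p g) \<subseteq> range (\<lambda>z. Bg z - z)"
    unfolding coinv_rel_def by (rule span_minimal[OF _ D.subspace_image[OF subspace_UNIV]])
next
  obtain n where n: "n \<in> conjset p g" "\<rho> n = Bg" using rho_conjset_gen by blast
  have "\<rho> n z - z \<in> {\<rho> n w - w | n w. n \<in> conjset p g}" for z using n(1) by blast
  hence "Bg z - z \<in> {\<rho> n w - w | n w. n \<in> conjset p g}" for z unfolding n(2) .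
  thus "range (\<lambda>z. Bg z - z) \<subseteq> coinv_rel scale \<rho> (conjset p g)"
    unfolding coinv_rel_def by (blast intro: span_base)
qed

end

end

definition inv_complement ::
    "('k::field \<Rightarrow> 'v::ab_group_add \<Rightarrow> 'v) \<Rightarrow> (m2 \<Rightarrow> 'v \<Rightarrow> 'v) \<Rightarrow> m2 set \<Rightarrow> m2 set \<Rightarrow> bool" where
  "inv_complement scale \<rho> N N' \<longleftrightarrow>
     (\<forall>x\<in>invariants \<rho> N'. x \<in> coinv_rel scale \<rho> N \<longrightarrow> x = 0) \<and>
     (\<forall>w. \<exists>w'\<in>invariants \<rho> N'. w - w' \<in> coinv_rel scale \<rho> N)"

text \<open>The main structural result: conjugating \<open>N'\<close> to \<open>U\<close> puts \<open>N\<close> in the position of the core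
  theorem, whose generator \<open>B\<close> is the generator of \<open>N\<close>.\<close>
theorem invariants_complement:
  fixes scale :: "'k::field \<Rightarrow> 'v::ab_group_add \<Rightarrow> 'v" and \<rho> :: "m2 \<Rightarrow> 'v \<Rightarrow> 'v"
  assumes pr: "prime p" and ch: "CHAR('k) = p"
    and uN: "unip_rad_borel p N" and uN': "unip_rad_borel p N'" and NN: "N \<noteq> N'"
    and rep: "is_rep p scale \<rho>" and gen: "generated_by_inv p scale \<rho> N'"
  shows "inv_complement scale \<rho> N N'"
proof -
  interpret K: krep scale p "Rof p \<rho> :: 'k km \<Rightarrow> 'v \<Rightarrow> 'v" by (rule krepI[OF pr ch rep])
  let ?R = "Rof p \<rho> :: 'k km \<Rightarrow> 'v \<Rightarrow> 'v"
  have rho: "\<rho> x = ?R (emb x)" if "x \<in> SL2 p" for x by (rule Rof_emb[OF pr ch that])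
  obtain g g' where g: "g \<in> SL2 p" "N = conjset p g" and g': "g' \<in> SL2 p" "N' = conjset p g'"
    using uN uN' unfolding unip_rad_borel_conjset by blast
  let ?G0 = "emb g :: 'k km" and ?G1 = "emb g' :: 'k km"
  have G1: "?G1 \<in> Gk" by (rule SL2_emb[OF pr ch g'(1)])
  obtain a b c d where H: "kmul (kinv ?G1) ?G0 = (a, b, c, d)" and c0: "c \<noteq> 0"
    using distinct_radicals[OF pr ch g(1) g'(1)] NN g(2) g'(2) by metis
  have HG: "(a, b, c, d) \<in> Gk" using Gk_mul[OF Gk_inv[OF G1] SL2_emb[OF pr ch g(1)]] H by simp
  interpret T: krep scale p "\<lambda>X. ?R (conjk ?G1 X)" by (rule K.twisted[OF G1])
  have inv: "invariants \<rho> N' = T.I0"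
    using K.invariants_conjset[OF rho g'(1)] g'(2) unfolding T.I0_def T.A_def by simp
  let ?B = "?R (conjk ?G1 (conjk (a, b, c, d) (Uk 1)))"
  have "conjk ?G1 (conjk (a, b, c, d) (Uk 1)) = conjk ?G0 (Uk 1)"
    unfolding H[symmetric] conjk_conjk[symmetric] kmul_assoc[symmetric]
    using kmul_inv_r[OF Gk_det[OF G1]] by simp
  hence coinv: "coinv_rel scale \<rho> N = range (\<lambda>z. ?B z - z)"
    using K.coinv_rel_conjset[OF rho g(1)] g(2) by simp
  have gen': "K.span (T.Gen T.I0) = UNIV"
    using K.generated_twisted[OF rho G1, where I = "T.I0"] gen
    unfolding generated_by_inv_def T.Gen_def inv by blast
  show ?thesis unfolding inv_complement_def inv coinv
  proof (intro conjI ballI allI impI)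
    fix x assume x: "x \<in> T.I0" "x \<in> range (\<lambda>z. ?B z - z)"
    then obtain z where "x = ?B z - z" by blast
    thus "x = 0" using T.core_inj[OF HG c0 gen' x(1)] by simp
  next
    fix w
    obtain m z where "m \<in> T.I0" "w = m + (?B z - z)"
      using T.core_surj[OF HG c0 gen'] by blast
    thus "\<exists>w'\<in>T.I0. w - w' \<in> range (\<lambda>z. ?B z - z)"
      by (intro bexI[of _ m]) auto
  qed
qed

section \<open>The bijection \<open>W\<^sup>N\<^sup>' \<cong> W\<^sub>N\<close> and exactness\<close>

lemma (in vector_space) coset_eq_iff:
  assumes C: "subspace C"
  shows "{x + s | s. s \<in> C} = {y + s | s. s \<in> C} \<longleftrightarrow> x - y \<in> C"
proof
  assume "{x + s | s. s \<in> C} = {y + s | s. s \<in> C}"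
  moreover have "x \<in> {x + s | s. s \<in> C}" using subspace_0[OF C] by force
  ultimately obtain s where "x = y + s" "s \<in> C" by blast
  thus "x - y \<in> C" by simp
next
  assume d: "x - y \<in> C"
  have "x + s \<in> {y + s | s. s \<in> C}" if "s \<in> C" for s
    using subspace_add[OF C d that] by (intro CollectI exI[of _ "(x - y) + s"]) simp
  moreover have "y + s \<in> {x + s | s. s \<in> C}" if "s \<in> C" for s
    using subspace_diff[OF C that d] by (intro CollectI exI[of _ "s - (x - y)"]) simp
  ultimately show "{x + s | s. s \<in> C} = {y + s | s. s \<in> C}" by blast
qed

lemma is_rep_vs: "is_rep p scale \<rho> \<Longrightarrow> vector_space scale"
  by (simp add: is_rep_def)

lemma class_eq:
  assumes "vector_space scale"
  shows "coinv_class scale \<rho> N x = coinv_class scale \<rho> N y \<longleftrightarrow> x - y \<in> coinv_rel scale \<rho> N"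
proof -
  interpret vector_space scale by (rule assms)
  show ?thesis unfolding coinv_class_def coinv_rel_def by (rule coset_eq_iff[OF subspace_span])
qed

text \<open>Unipotent radicals are subgroups of \<open>SL2 p\<close> (the field \<open>'k\<close> only serves to compute in).\<close>
lemma unip_SL2:
  assumes pr: "prime p" and ch: "CHAR('k::field) = p" and u: "unip_rad_borel p N"
  shows "N \<subseteq> SL2 p"
proof -
  obtain g where "g \<in> SL2 p" "N = conjset p g" using u unfolding unip_rad_borel_conjset by blast
  thus ?thesis using conjset_elem[OF pr ch] by blast
qed

lemma invariants_diff:
  assumes rep: "is_rep p scale \<rho>" and NS: "N \<subseteq> SL2 p"
    and x: "x \<in> invariants \<rho> N" and y: "y \<in> invariants \<rho> N"
  shows "x - y \<in> invariants \<rho> N"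
  unfolding invariants_def
proof (intro CollectI ballI)
  fix n assume n: "n \<in> N"
  have "Vector_Spaces.linear scale scale (\<rho> n)" using rep n NS by (auto simp: is_rep_def)
  hence "module_hom scale scale (\<rho> n)" using module_hom_iff_linear by blast
  hence "\<rho> n (x - y) = \<rho> n x - \<rho> n y" by (rule module_hom.diff)
  thus "\<rho> n (x - y) = x - y" using x y n by (simp add: invariants_def)
qed

lemma Gmap_inv:
  assumes fm: "G_map p s1 \<rho>1 s2 \<rho>2 f" and NS: "N \<subseteq> SL2 p" and x: "x \<in> invariants \<rho>1 N"
  shows "f x \<in> invariants \<rho>2 N"
  unfolding invariants_def
proof (intro CollectI ballI)
  fix n assume n: "n \<in> N"
  have "f (\<rho>1 n x) = \<rho>2 n (f x)" using fm n NS by (auto simp: G_map_def)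
  thus "\<rho>2 n (f x) = f x" using x n by (simp add: invariants_def)
qed

lemma Gmap_coinv:
  assumes fm: "G_map p s1 \<rho>1 s2 \<rho>2 f" and NS: "N \<subseteq> SL2 p" and x: "x \<in> coinv_rel s1 \<rho>1 N"
  shows "f x \<in> coinv_rel s2 \<rho>2 N"
proof -
  interpret h: module_hom s1 s2 f using fm module_hom_iff_linear[of s1 s2 f] by (simp add: G_map_def)
  have "f ` {\<rho>1 n w - w | n w. n \<in> N} \<subseteq> {\<rho>2 n w - w | n w. n \<in> N}"
    using fm NS h.diff unfolding G_map_def by fastforce
  hence "h.m2.span (f ` {\<rho>1 n w - w | n w. n \<in> N}) \<subseteq> coinv_rel s2 \<rho>2 N"
    unfolding coinv_rel_def by (rule h.m2.span_mono)
  moreover have "f x \<in> h.m2.span (f ` {\<rho>1 n w - w | n w. n \<in> N})"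
    using x h.span_image unfolding coinv_rel_def by blast
  ultimately show ?thesis by blast
qed

lemma complement_bij:
  assumes rep: "is_rep p scale \<rho>" and NS': "N' \<subseteq> SL2 p" and K: "inv_complement scale \<rho> N N'"
  shows "bij_betw (coinv_class scale \<rho> N) (invariants \<rho> N') (coinvariants scale \<rho> N)"
  unfolding bij_betw_def
proof
  show "inj_on (coinv_class scale \<rho> N) (invariants \<rho> N')"
  proof (rule inj_onI)
    fix x y assume x: "x \<in> invariants \<rho> N'" and y: "y \<in> invariants \<rho> N'"
      and "coinv_class scale \<rho> N x = coinv_class scale \<rho> N y"
    hence "x - y \<in> coinv_rel scale \<rho> N" using class_eq[OF is_rep_vs[OF rep]] by blast
    hence "x - y = 0" using K invariants_diff[OF rep NS' x y] unfolding inv_complement_def by blast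
    thus "x = y" by simp
  qed
next
  have "coinv_class scale \<rho> N w \<in> coinv_class scale \<rho> N ` invariants \<rho> N'" for w
    using K class_eq[OF is_rep_vs[OF rep]] unfolding inv_complement_def by blast
  thus "coinv_class scale \<rho> N ` invariants \<rho> N' = coinvariants scale \<rho> N"
    unfolding coinvariants_def by blast
qed

text \<open>Exactness of the invariants functor on \<open>0 \<rightarrow> W1 \<rightarrow> W2 \<rightarrow> W3 \<rightarrow> 0\<close>: left exactness is
  formal, right exactness uses the complement property of \<open>W2\<close> and \<open>W3\<close>.\<close>
lemma invariants_exact:
  assumes r3: "is_rep p s3 \<rho>3" and NS: "N \<subseteq> SL2 p" and NS': "N' \<subseteq> SL2 p"
    and K2: "inv_complement s2 \<rho>2 N N'" and K3: "inv_complement s3 \<rho>3 N N'"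
    and fm: "G_map p s1 \<rho>1 s2 \<rho>2 f" and gm: "G_map p s2 \<rho>2 s3 \<rho>3 g"
    and injf: "inj f" and surjg: "surj g" and ex: "range f = {w. g w = 0}"
  shows "inj_on f (invariants \<rho>1 N') \<and>
         f ` invariants \<rho>1 N' = {w \<in> invariants \<rho>2 N'. g w = 0} \<and>
         g ` invariants \<rho>2 N' = invariants \<rho>3 N'"
proof (intro conjI)
  interpret hg: module_hom s2 s3 g using gm module_hom_iff_linear[of s2 s3 g] by (simp add: G_map_def)
  show "inj_on f (invariants \<rho>1 N')" using injf by (rule inj_on_subset) simp
  have reflect: "x \<in> invariants \<rho>1 N'" if fx: "f x \<in> invariants \<rho>2 N'" for x
    unfolding invariants_def
  proof (intro CollectI ballI)
    fix n assume n: "n \<in> N'"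
    have "f (\<rho>1 n x) = \<rho>2 n (f x)" using fm n NS' by (auto simp: G_map_def)
    also have "\<dots> = f x" using fx n by (simp add: invariants_def)
    finally show "\<rho>1 n x = x" using injf by (simp add: inj_eq)
  qed
  show "f ` invariants \<rho>1 N' = {w \<in> invariants \<rho>2 N'. g w = 0}"
  proof (intro equalityI subsetI)
    fix w assume "w \<in> f ` invariants \<rho>1 N'"
    thus "w \<in> {w \<in> invariants \<rho>2 N'. g w = 0}" using Gmap_inv[OF fm NS'] ex by blast
  next
    fix w assume w: "w \<in> {w \<in> invariants \<rho>2 N'. g w = 0}"
    then obtain x where "w = f x" using ex by blast
    thus "w \<in> f ` invariants \<rho>1 N'" using w reflect by blast
  qed
  have "y \<in> g ` invariants \<rho>2 N'" if y: "y \<in> invariants \<rho>3 N'" for y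
  proof -
    obtain w where w: "y = g w" using surjg by blast
    obtain w' where w': "w' \<in> invariants \<rho>2 N'" "w - w' \<in> coinv_rel s2 \<rho>2 N"
      using K2 unfolding inv_complement_def by blast
    have "y - g w' \<in> coinv_rel s3 \<rho>3 N" using Gmap_coinv[OF gm NS w'(2)] w hg.diff by simp
    moreover have "y - g w' \<in> invariants \<rho>3 N'"
      by (rule invariants_diff[OF r3 NS' y Gmap_inv[OF gm NS' w'(1)]])
    ultimately have "y - g w' = 0" using K3 unfolding inv_complement_def by blast
    hence "y = g w'" by simp
    thus ?thesis using w'(1) by blast
  qed
  moreover have "g ` invariants \<rho>2 N' \<subseteq> invariants \<rho>3 N'" using Gmap_inv[OF gm NS'] by blast
  ultimately show "g ` invariants \<rho>2 N' = invariants \<rho>3 N'" by blast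
qed

text \<open>If a module map sends \<open>w\<close> to a coinvariant relation, then so it does with the invariant
  representative \<open>w'\<close> of \<open>w\<close>, whose image is an invariant relation and therefore zero.\<close>
lemma Gmap_coinv_kernel:
  assumes r2: "is_rep p s2 \<rho>2" and NS: "N \<subseteq> SL2 p" and NS': "N' \<subseteq> SL2 p"
    and K1: "inv_complement s1 \<rho>1 N N'" and K2: "inv_complement s2 \<rho>2 N N'"
    and fm: "G_map p s1 \<rho>1 s2 \<rho>2 f" and fw: "f w \<in> coinv_rel s2 \<rho>2 N"
  obtains w' where "w' \<in> invariants \<rho>1 N'" "w - w' \<in> coinv_rel s1 \<rho>1 N" "f w' = 0"
proof -
  interpret v2: vector_space s2 by (rule is_rep_vs[OF r2])
  interpret hf: module_hom s1 s2 f using fm module_hom_iff_linear[of s1 s2 f] by (simp add: G_map_def)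
  obtain w' where w': "w' \<in> invariants \<rho>1 N'" "w - w' \<in> coinv_rel s1 \<rho>1 N"
    using K1 unfolding inv_complement_def by blast
  have "f w - f w' \<in> coinv_rel s2 \<rho>2 N" using Gmap_coinv[OF fm NS w'(2)] hf.diff by simp
  hence "f w' \<in> coinv_rel s2 \<rho>2 N"
    using fw v2.span_diff unfolding coinv_rel_def by fastforce
  hence "f w' = 0" using K2 Gmap_inv[OF fm NS' w'(1)] unfolding inv_complement_def by blast
  thus ?thesis using that w' by blast
qed

text \<open>Exactness of the coinvariants functor, obtained by detecting kernels on invariant
  representatives.\<close>
lemma coinvariants_exact:
  assumes r1: "is_rep p s1 \<rho>1" and r2: "is_rep p s2 \<rho>2" and r3: "is_rep p s3 \<rho>3"
    and NS: "N \<subseteq> SL2 p" and NS': "N' \<subseteq> SL2 p"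
    and K1: "inv_complement s1 \<rho>1 N N'" and K2: "inv_complement s2 \<rho>2 N N'"
    and K3: "inv_complement s3 \<rho>3 N N'"
    and fm: "G_map p s1 \<rho>1 s2 \<rho>2 f" and gm: "G_map p s2 \<rho>2 s3 \<rho>3 g"
    and injf: "inj f" and surjg: "surj g" and ex: "range f = {w. g w = 0}"
  shows "(\<forall>w. coinv_class s2 \<rho>2 N (f w) = coinv_class s2 \<rho>2 N 0 \<longrightarrow>
              coinv_class s1 \<rho>1 N w = coinv_class s1 \<rho>1 N 0) \<and>
         (\<forall>w. coinv_class s3 \<rho>3 N (g w) = coinv_class s3 \<rho>3 N 0 \<longleftrightarrow>
              (\<exists>u. coinv_class s2 \<rho>2 N w = coinv_class s2 \<rho>2 N (f u))) \<and>
         (\<forall>z. \<exists>w. coinv_class s3 \<rho>3 N (g w) = coinv_class s3 \<rho>3 N z)"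
proof -
  interpret hf: module_hom s1 s2 f using fm module_hom_iff_linear[of s1 s2 f] by (simp add: G_map_def)
  interpret hg: module_hom s2 s3 g using gm module_hom_iff_linear[of s2 s3 g] by (simp add: G_map_def)
  note cl1 = class_eq[OF is_rep_vs[OF r1]] and cl2 = class_eq[OF is_rep_vs[OF r2]]
    and cl3 = class_eq[OF is_rep_vs[OF r3]]
  have "coinv_class s1 \<rho>1 N w = coinv_class s1 \<rho>1 N 0"
    if "coinv_class s2 \<rho>2 N (f w) = coinv_class s2 \<rho>2 N 0" for w
  proof -
    have "f w \<in> coinv_rel s2 \<rho>2 N" using that cl2 by simp
    then obtain w' where "w - w' \<in> coinv_rel s1 \<rho>1 N" "f w' = 0"
      using Gmap_coinv_kernel[OF r2 NS NS' K1 K2 fm] by blast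
    moreover have "w' = 0" using \<open>f w' = 0\<close> injf hf.zero by (metis injD)
    ultimately show ?thesis using cl1 by simp
  qed
  moreover have "\<exists>u. coinv_class s2 \<rho>2 N w = coinv_class s2 \<rho>2 N (f u)"
    if "coinv_class s3 \<rho>3 N (g w) = coinv_class s3 \<rho>3 N 0" for w
  proof -
    have "g w \<in> coinv_rel s3 \<rho>3 N" using that cl3 by simp
    then obtain w' where "w - w' \<in> coinv_rel s2 \<rho>2 N" "g w' = 0"
      using Gmap_coinv_kernel[OF r3 NS NS' K2 K3 gm] by blast
    moreover obtain u where "w' = f u" using \<open>g w' = 0\<close> ex by blast
    ultimately show ?thesis using cl2 by blast
  qed
  moreover have "coinv_class s3 \<rho>3 N (g w) = coinv_class s3 \<rho>3 N 0"
    if "coinv_class s2 \<rho>2 N w = coinv_class s2 \<rho>2 N (f u)" for w u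
  proof -
    have "g (w - f u) \<in> coinv_rel s3 \<rho>3 N" using that cl2 Gmap_coinv[OF gm NS] by blast
    moreover have "g (f u) = 0" using ex by blast
    ultimately show ?thesis using cl3 hg.diff by simp
  qed
  moreover have "\<exists>w. coinv_class s3 \<rho>3 N (g w) = coinv_class s3 \<rho>3 N z" for z
  proof -
    obtain w where "z = g w" using surjg by blast
    thus ?thesis by blast
  qed
  ultimately show ?thesis by (intro conjI allI impI iffI) (blast+)
qed

theorem mainTheorem3:
  fixes p :: nat and N N' :: "m2 set"
    and scale :: "'k::field \<Rightarrow> 'v::ab_group_add \<Rightarrow> 'v" and \<rho> :: "m2 \<Rightarrow> 'v \<Rightarrow> 'v"
    and s1 :: "'k \<Rightarrow> 'a::ab_group_add \<Rightarrow> 'a" and \<rho>1 :: "m2 \<Rightarrow> 'a \<Rightarrow> 'a"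
    and s2 :: "'k \<Rightarrow> 'b::ab_group_add \<Rightarrow> 'b" and \<rho>2 :: "m2 \<Rightarrow> 'b \<Rightarrow> 'b"
    and s3 :: "'k \<Rightarrow> 'c::ab_group_add \<Rightarrow> 'c" and \<rho>3 :: "m2 \<Rightarrow> 'c \<Rightarrow> 'c"
    and f :: "'a \<Rightarrow> 'b" and g :: "'b \<Rightarrow> 'c"
  assumes "prime p" and "CHAR('k) = p"
    and "unip_rad_borel p N" and "unip_rad_borel p N'" and "N \<noteq> N'"
  shows
    "(is_rep p scale \<rho> \<and> generated_by_inv p scale \<rho> N' \<longrightarrow>
        bij_betw (coinv_class scale \<rho> N) (invariants \<rho> N') (coinvariants scale \<rho> N))
     \<and>
     (is_rep p s1 \<rho>1 \<and> generated_by_inv p s1 \<rho>1 N' \<and>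
      is_rep p s2 \<rho>2 \<and> generated_by_inv p s2 \<rho>2 N' \<and>
      is_rep p s3 \<rho>3 \<and> generated_by_inv p s3 \<rho>3 N' \<and>
      G_map p s1 \<rho>1 s2 \<rho>2 f \<and> G_map p s2 \<rho>2 s3 \<rho>3 g \<and>
      inj f \<and> surj g \<and> range f = {w. g w = 0}
      \<longrightarrow>
        (inj_on f (invariants \<rho>1 N') \<and>
         f ` invariants \<rho>1 N' = {w \<in> invariants \<rho>2 N'. g w = 0} \<and>
         g ` invariants \<rho>2 N' = invariants \<rho>3 N')
      \<and>
        ((\<forall>w. coinv_class s2 \<rho>2 N (f w) = coinv_class s2 \<rho>2 N 0 \<longrightarrow>
              coinv_class s1 \<rho>1 N w = coinv_class s1 \<rho>1 N 0) \<and>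
         (\<forall>w. coinv_class s3 \<rho>3 N (g w) = coinv_class s3 \<rho>3 N 0 \<longleftrightarrow>
              (\<exists>u. coinv_class s2 \<rho>2 N w = coinv_class s2 \<rho>2 N (f u))) \<and>
         (\<forall>z. \<exists>w. coinv_class s3 \<rho>3 N (g w) = coinv_class s3 \<rho>3 N z)))"
proof -
  note complement = invariants_complement[OF assms]
  have NS: "N \<subseteq> SL2 p" and NS': "N' \<subseteq> SL2 p"
    using unip_SL2[OF assms(1,2,3)] unip_SL2[OF assms(1,2,4)] .
  note exact = conjI[OF invariants_exact[OF _ NS NS' complement complement]
    coinvariants_exact[OF _ _ _ NS NS' complement complement complement]]
  show ?thesis
    by (rule conjI; intro impI; elim conjE) (rule complement_bij[OF _ NS' complement] exact; assumption)+
qed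

end
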